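(* Let $q\ge 2$, $\eta\ge 1$, $u\ge 1$ and $n\ge 1$ be integers, and let $\mathcal{C}\subseteq\{0,1,\dots,q-1\}^n$ be a code consisting of $N\ge u+1$ distinct codewords. Then $\mathcal{C}$ is a $[q;Q;\eta;u]$-SQ-disjunct code if and only if no codeword is included in a set of $u$ other codewords; that is, if and only if for every $\mathbf{x}\in\mathcal{C}$ and every set $\mathcal{Z}\subseteq\mathcal{C}\setminus\{\mathbf{x}\}$ with $|\mathcal{Z}|=u$, it is not the case that $\{\mathbf{x}\}\lhd\mathcal{Z}$.
   Context: Semi-quantitative group testing with equidistant thresholds: $\eta$ is a positive integer (the threshold spacing). For $s\ge 1$ vectors $\mathbf{x}_1,\dots,\mathbf{x}_s\in\{0,\dots,q-1\}^n$, their SQ-sum (syndrome) is the vector $\mathbf{y}=\mathbf{x}_1\circledast\cdots\circledast\mathbf{x}_s$ of length $n$ with $i$-th coordinate $y_i=\left\lfloor\frac{x_{i,1}+\cdots+x_{i,s}}{\eta}\right\rfloor$ (ordinary integer addition), where $x_{i,j}$ is the $i$-th coordinate of $\mathbf{x}_j$. A set of codewords $\mathcal{X}$ with syndrome $\mathbf{y}_{\mathcal{X}}$ is included in a set of codewords $\mathcal{Z}$ with syndrome $\mathbf{y}_{\mathcal{Z}}$, written $\mathcal{X}\lhd\mathcal{Z}$, if $(\mathbf{y}_{\mathcal{X}})_i\le(\mathbf{y}_{\mathcal{Z}})_i$ for all $i=1,\dots,n$. A code $\mathcal{C}$ of length $n$ is a $[q;Q;\eta;u]$-SQ-disjunct code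 if for all $1\le s,t\le u$ and all sets $\mathcal{X}=\{\mathbf{x}_1,\dots,\mathbf{x}_s\}\subseteq\mathcal{C}$, $\mathcal{Z}=\{\mathbf{z}_1,\dots,\mathbf{z}_t\}\subseteq\mathcal{C}$ of codewords, $\mathcal{X}\lhd\mathcal{Z}$ implies $\mathcal{X}\subseteq\mathcal{Z}$. (Here $Q$ denotes the number of possible test outcomes and is assumed large enough that no outcome saturates; it plays no further role.) *)

theory Defs
  imports Main
begin

text \<open>Words of length n over the alphabet {0,...,q-1}, represented as functions
  nat => nat that are zero outside the index range {0..<n}.\<close>
definition words :: "nat \<Rightarrow> nat \<Rightarrow> (nat \<Rightarrow> nat) set" where
  "words q n = {x. (\<forall>i<n. x i < q) \<and> (\<forall>i\<ge>n. x i = 0)}"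

definition sq_syndrome :: "nat \<Rightarrow> (nat \<Rightarrow> nat) set \<Rightarrow> nat \<Rightarrow> nat" where
  "sq_syndrome \<eta> X i = (\<Sum>x\<in>X. x i) div \<eta>"

definition sq_included :: "nat \<Rightarrow> nat \<Rightarrow> (nat \<Rightarrow> nat) set \<Rightarrow> (nat \<Rightarrow> nat) set \<Rightarrow> bool" where
  "sq_included n \<eta> X Z \<longleftrightarrow> (\<forall>i<n. sq_syndrome \<eta> X i \<le> sq_syndrome \<eta> Z i)"

text \<open>[q;Q;eta;u]-SQ-disjunct code (Q plays no role).\<close>
definition sq_disjunct :: "nat \<Rightarrow> nat \<Rightarrow> nat \<Rightarrow> (nat \<Rightarrow> nat) set \<Rightarrow> bool" where
  "sq_disjunct n \<eta> u C \<longleftrightarrow>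
     (\<forall>X Z. X \<subseteq> C \<longrightarrow> Z \<subseteq> C \<longrightarrow>
        1 \<le> card X \<longrightarrow> card X \<le> u \<longrightarrow> 1 \<le> card Z \<longrightarrow> card Z \<le> u \<longrightarrow>
        sq_included n \<eta> X Z \<longrightarrow> X \<subseteq> Z)"

end

theory Submission
  imports Defs
begin

text \<open>The syndrome is monotone in the set of codewords, so inclusion survives shrinking the
  left set and enlarging the right one. If X \<lhd> Z with x \<in> X - Z, then {x} \<lhd> Z, and Z can be
  padded with codewords other than x up to exactly u elements (possible since |C| \<ge> u + 1),
  giving a codeword included in u others.\<close>

lemma exists_card_between:
  assumes "finite B" "A \<subseteq> B" "card A \<le> k" "k \<le> card B"
  obtains A' where "A \<subseteq> A'" "A' \<subseteq> B" "card A' = k"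
proof -
  have "finite A" using assms finite_subset by blast
  then have "k - card A \<le> card (B - A)"
    using assms by (simp add: card_Diff_subset)
  then obtain D where D: "D \<subseteq> B - A" "card D = k - card A"
    by (meson obtain_subset_with_card_n)
  have "finite D" using D assms by (meson finite_Diff finite_subset)
  then have "card (A \<union> D) = k"
    using D \<open>finite A\<close> assms(3) by (subst card_Un_disjoint) auto
  then show thesis using D assms by (intro that[of "A \<union> D"]) auto
qed

lemma sq_syndrome_mono:
  assumes "finite B" "A \<subseteq> B"
  shows "sq_syndrome \<eta> A i \<le> sq_syndrome \<eta> B i"
  unfolding sq_syndrome_def by (intro div_le_mono sum_mono2 assms) auto

lemma sq_included_mono:
  assumes "sq_included n \<eta> X Z" "finite X" "X' \<subseteq> X" "finite Z'" "Z \<subseteq> Z'"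
  shows "sq_included n \<eta> X' Z'"
  unfolding sq_included_def
proof (intro allI impI)
  fix i assume "i < n"
  have "sq_syndrome \<eta> X' i \<le> sq_syndrome \<eta> X i" using assms(2,3) by (rule sq_syndrome_mono)
  also have "\<dots> \<le> sq_syndrome \<eta> Z i" using assms(1) \<open>i < n\<close> unfolding sq_included_def by blast
  also have "\<dots> \<le> sq_syndrome \<eta> Z' i" using assms(4,5) by (rule sq_syndrome_mono)
  finally show "sq_syndrome \<eta> X' i \<le> sq_syndrome \<eta> Z' i" .
qed

theorem proposition1:
  fixes q \<eta> u n :: nat and C :: "(nat \<Rightarrow> nat) set"
  assumes "q \<ge> 2" and "\<eta> \<ge> 1" and "u \<ge> 1" and "n \<ge> 1"
    and "C \<subseteq> words q n" and "finite C" and "card C \<ge> u + 1"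
  shows "sq_disjunct n \<eta> u C \<longleftrightarrow>
    (\<forall>x\<in>C. \<forall>Z. Z \<subseteq> C - {x} \<longrightarrow> card Z = u \<longrightarrow> \<not> sq_included n \<eta> {x} Z)"
proof
  assume disjunct: "sq_disjunct n \<eta> u C"
  show "\<forall>x\<in>C. \<forall>Z. Z \<subseteq> C - {x} \<longrightarrow> card Z = u \<longrightarrow> \<not> sq_included n \<eta> {x} Z"
  proof (intro ballI allI impI notI)
    fix x Z
    assume "x \<in> C" "Z \<subseteq> C - {x}" "card Z = u" "sq_included n \<eta> {x} Z"
    then have "{x} \<subseteq> Z"
      using disjunct[unfolded sq_disjunct_def, rule_format, of "{x}" Z] \<open>u \<ge> 1\<close> by auto
    then show False using \<open>Z \<subseteq> C - {x}\<close> by auto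
  qed
next
  assume no_single: "\<forall>x\<in>C. \<forall>Z. Z \<subseteq> C - {x} \<longrightarrow> card Z = u \<longrightarrow> \<not> sq_included n \<eta> {x} Z"
  show "sq_disjunct n \<eta> u C" unfolding sq_disjunct_def
  proof (intro allI impI subsetI, rule ccontr)
    fix X Z x
    assume "X \<subseteq> C" "Z \<subseteq> C" "card Z \<le> u" "sq_included n \<eta> X Z" "x \<in> X" "x \<notin> Z"
    have "u \<le> card (C - {x})"
      using assms(6,7) \<open>X \<subseteq> C\<close> \<open>x \<in> X\<close> by (auto simp: card_Diff_singleton)
    then obtain Z' where Z': "Z \<subseteq> Z'" "Z' \<subseteq> C - {x}" "card Z' = u"
      using exists_card_between[of "C - {x}" Z u] \<open>finite C\<close> \<open>Z \<subseteq> C\<close> \<open>x \<notin> Z\<close> \<open>card Z \<le> u\<close>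
      by blast
    have "sq_included n \<eta> {x} Z'"
      using \<open>sq_included n \<eta> X Z\<close> \<open>finite C\<close> \<open>X \<subseteq> C\<close> \<open>x \<in> X\<close> Z'
      by (elim sq_included_mono) (auto intro: finite_subset)
    then show False using no_single \<open>x \<in> X\<close> \<open>X \<subseteq> C\<close> Z' by blast
  qed
qed

end
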